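(* Let $\alpha\in(0,\pi/2]$ and consider the system of two nonlinear equations in the unknowns $d$ and $u_1$ \begin{align*} &3(1+\cos\alpha) d^2 + 8\cos\left(\frac{\alpha}{2}\right)d u_1 + 6u_1^2 - 10(1+\alpha\csc\alpha)=0,\\ &4 d^6 - 24 d^4 + 57 d^2 - 12\sec\left(\frac{\alpha}{2}\right) d (d^2-3) u_1 + 9\sec^2\left(\frac{\alpha}{2}\right)u_1^2 + 105\csc^2\left(\frac{\alpha}{2}\right)\left(1-\alpha\csc\alpha\right)=0. \end{align*} Let $p(x)=p_1(\sqrt{x})$, where \begin{align*} p_1(d)&=-32 \sin^6\alpha\, d^{12} +256 \sin^6\alpha\,d^{10} -1184 \sin^6\alpha\,d^{8}\\ &-96 \sin^3\alpha\,(-40 \alpha +9 \sin\alpha +20 \sin2\alpha+7\sin3\alpha -30 \alpha \cos\alpha)\,d^{6}\\ &+96 \sin^3\alpha\,(-160\alpha +99 \sin\alpha +80 \sin2\alpha+7 \sin3\alpha -120\alpha \cos\alpha)\,d^{4}\\ &+13440 (\alpha -\sin\alpha)\sin^5\alpha\, \csc^2\left(\frac{\alpha }{2}\right)\,d^{2} -1800 \left(6\alpha +8\alpha\cos\alpha -2\sin\alpha(3\cos\alpha+4)\right)^2 . \end{align*} Then the number of real solutions $(d,u_1)$ of this system with $d>0$ is the same as the number of positive zeros of $p$.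
   Context: Interpolation of $G^2$ data (two points, tangent directions, curvatures) and arc length by Pythagorean-hodograph curves of degree 7, with hodograph $\mathbf{w}^2$ where $\mathbf{w}$ is a complex cubic with Bernstein coefficients $\mathbf{w}_0,\dots,\mathbf{w}_3$, $\mathbf{w}_0 = d\,e^{i\theta_0/2}$, $\mathbf{w}_3=d\,e^{i\theta_1/2}$, $\mathbf{w}_1=u_1+iv_1$, $\mathbf{w}_2=u_2+iv_2$. Data are taken from a circular arc of inner angle $2\alpha$ in canonical position ($\theta_0=-\theta_1=\alpha$, $\kappa_0=\kappa_1=-2\sin\alpha$, $L=\alpha\csc\alpha$), and the symmetric case $u_1=u_2$ (hence $v_2=-v_1$) is considered, which reduces the problem to the system above. Here $\csc=1/\sin$, $\sec=1/\cos$. *)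

theory Defs
  imports Complex_Main "HOL-Library.Equipollence"
begin

definition csc :: "real \<Rightarrow> real" where "csc x = 1 / sin x"
definition sec :: "real \<Rightarrow> real" where "sec x = 1 / cos x"

definition eq1 :: "real \<Rightarrow> real \<Rightarrow> real \<Rightarrow> bool" where
  "eq1 \<alpha> d u1 \<longleftrightarrow>
     3 * (1 + cos \<alpha>) * d^2 + 8 * cos (\<alpha>/2) * d * u1 + 6 * u1^2
       - 10 * (1 + \<alpha> * csc \<alpha>) = 0"

definition eq2 :: "real \<Rightarrow> real \<Rightarrow> real \<Rightarrow> bool" where
  "eq2 \<alpha> d u1 \<longleftrightarrow>
     4 * d^6 - 24 * d^4 + 57 * d^2 - 12 * sec (\<alpha>/2) * d * (d^2 - 3) * u1
       + 9 * (sec (\<alpha>/2))^2 * u1^2 + 105 * (csc (\<alpha>/2))^2 * (1 - \<alpha> * csc \<alpha>) = 0"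

definition p1 :: "real \<Rightarrow> real \<Rightarrow> real" where
  "p1 \<alpha> d =
     - 32 * (sin \<alpha>)^6 * d^12 + 256 * (sin \<alpha>)^6 * d^10 - 1184 * (sin \<alpha>)^6 * d^8
     - 96 * (sin \<alpha>)^3 * (-40 * \<alpha> + 9 * sin \<alpha> + 20 * sin (2*\<alpha>) + 7 * sin (3*\<alpha>)
                             - 30 * \<alpha> * cos \<alpha>) * d^6
     + 96 * (sin \<alpha>)^3 * (-160 * \<alpha> + 99 * sin \<alpha> + 80 * sin (2*\<alpha>) + 7 * sin (3*\<alpha>)
                             - 120 * \<alpha> * cos \<alpha>) * d^4
     + 13440 * (\<alpha> - sin \<alpha>) * (sin \<alpha>)^5 * (csc (\<alpha>/2))^2 * d^2
     - 1800 * (6 * \<alpha> + 8 * \<alpha> * cos \<alpha> - 2 * sin \<alpha> * (3 * cos \<alpha> + 4))^2"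

definition p :: "real \<Rightarrow> real \<Rightarrow> real" where
  "p \<alpha> x = p1 \<alpha> (sqrt x)"

end

theory Submission
  imports Defs "HOL-Analysis.Complex_Transcendental"
begin

text \<open>
  Subtracting \<open>3/2 sec\<^sup>2(\<alpha>/2)\<close> times the first equation from the second leaves the equation
  \<open>sec(\<alpha>/2) 12 d (d\<^sup>2 - 2) u\<^sub>1 = 4d\<^sup>6 - 24d\<^sup>4 + 48d\<^sup>2 + K(\<alpha>)\<close>, linear in \<open>u\<^sub>1\<close>.
  Its two sides never vanish together: at \<open>d = \<surd>2\<close> the right-hand side is \<open>32 + K(\<alpha>)\<close>,
  and \<open>K(\<alpha>) < -32\<close> amounts to
  \<open>(120 + 90 cos \<alpha>) sin \<alpha> + 16 sin\<^sup>3\<alpha> < (90 + 120 cos \<alpha>) \<alpha>\<close>, which follows from the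
  Maclaurin bounds \<open>sin \<alpha> \<le> \<alpha> - \<alpha>\<^sup>3/6 + \<alpha>\<^sup>5/120\<close> and \<open>cos \<alpha> \<ge> 1 - \<alpha>\<^sup>2/2 + \<alpha>\<^sup>4/24 - \<alpha>\<^sup>6/720\<close>
  and the positivity of a polynomial on \<open>[0, \<pi>/2]\<close>. Hence \<open>u\<^sub>1\<close> is determined by \<open>d\<close>, and
  eliminating it from the first equation leaves a resultant equal to \<open>p\<^sub>1(d)\<close> up to the
  factor \<open>-sin\<^sup>6\<alpha>/3\<close>. The solutions thus form the graph of a function over the positive
  zeros of \<open>p\<^sub>1\<close>, which \<open>d \<mapsto> d\<^sup>2\<close> maps bijectively onto the positive zeros of \<open>p\<close>.
\<close>

lemma sin_le_Maclaurin5: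
  fixes x :: real
  assumes "0 \<le> x" "x \<le> pi"
  shows "sin x \<le> x - x^3/6 + x^5/120"
proof (cases "x = 0")
  case False
  then obtain t where t: "0 < t" "t < x"
    and sin_x: "sin x = (\<Sum>m<6. sin_coeff m * x^m) + sin (t + 1/2 * real 6 * pi) / fact 6 * x^6"
    using Maclaurin_sin_expansion3[of 6 x] assms by auto
  have "sin (t + 1/2 * real 6 * pi) = - sin t"
    by (simp add: sin_add)
  moreover have "0 \<le> sin t"
    using t assms by (intro sin_ge_zero) auto
  moreover have "(\<Sum>m<6. sin_coeff m * x^m) = x - x^3/6 + x^5/120"
    by (simp add: sin_coeff_def lessThan_nat_numeral fact_numeral)
  ultimately show ?thesis
    using sin_x by (simp add: fact_numeral)
qed simp

lemma cos_ge_Maclaurin6: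
  fixes x :: real
  assumes "0 \<le> x" "x \<le> pi"
  shows "1 - x^2/2 + x^4/24 - x^6/720 \<le> cos x"
proof (cases "x = 0")
  case False
  then obtain t where t: "0 < t" "t < x"
    and cos_x: "cos x = (\<Sum>m<7. cos_coeff m * x^m) + cos (t + 1/2 * real 7 * pi) / fact 7 * x^7"
    using Maclaurin_cos_expansion2[of x 7] assms by auto
  have "cos (t + 1/2 * real 7 * pi) = sin t"
    using cos_expansion_lemma[of t 6] by (simp add: sin_add mult.commute)
  moreover have "0 \<le> sin t"
    using t assms by (intro sin_ge_zero) auto
  moreover have "(\<Sum>m<7. cos_coeff m * x^m) = 1 - x^2/2 + x^4/24 - x^6/720"
    by (simp add: cos_coeff_def lessThan_nat_numeral fact_numeral)
  ultimately show ?thesis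
    using cos_x assms by (simp add: fact_numeral)
qed simp

lemma sextic_pos:
  fixes t :: real
  assumes t0: "0 \<le> t" and t1: "t \<le> 5/2"
  shows "0 < 4 - 31/40*t^2 + 671/4320*t^3 - 193/14400*t^4 + 1/1800*t^5 - 1/108000*t^6"
proof -
  have t3: "0 \<le> t^3" "t^3 \<le> 125/8"
    using t0 power_mono[OF t1 t0, of 3] by (simp_all add: power_divide)
  have "t^4 \<le> 5/2 * t^3"
    using mult_right_mono[OF t1 t3(1)] by (simp add: power_eq_if)
  moreover have "t^6 \<le> 125/8 * t^3"
    using mult_right_mono[OF t3(2) t3(1)] by (simp add: power_add[symmetric])
  moreover have "0 \<le> t^5"
    using t0 by simp
  ultimately have cubic_le: "4 - 31/40*t^2 + t^3/10
      \<le> 4 - 31/40*t^2 + 671/4320*t^3 - 193/14400*t^4 + 1/1800*t^5 - 1/108000*t^6"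
    using t3 by linarith
  have "t^2 \<le> 5/2 * t"
    using mult_right_mono[OF t1 t0] by (simp add: power2_eq_square)
  then have "0 \<le> (5/2 - t) * (21/16 + 21/40*t - t^2/10)"
    using t0 t1 by simp
  moreover have "4 - 31/40*t^2 + t^3/10 = 23/32 + (5/2 - t) * (21/16 + 21/40*t - t^2/10)"
    by (simp add: field_simps power2_eq_square power3_eq_cube)
  ultimately show ?thesis
    using cubic_le by linarith
qed

lemma sin_cos_arc_inequality:
  fixes \<alpha> :: real
  assumes "0 < \<alpha>" "\<alpha> \<le> pi/2"
  shows "(120 + 90 * cos \<alpha>) * sin \<alpha> + 16 * (sin \<alpha>)^3 < (90 + 120 * cos \<alpha>) * \<alpha>"
proof -
  define S C where "S = sin \<alpha>" and "C = cos \<alpha>"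
  define Su where "Su = \<alpha> - \<alpha>^3/6 + \<alpha>^5/120"
  define Cl where "Cl = 1 - \<alpha>^2/2 + \<alpha>^4/24 - \<alpha>^6/720"
  have \<alpha>_pi: "\<alpha> \<le> pi"
    using assms pi_gt_zero by linarith
  have "\<alpha> \<le> 15708/10000"
    using assms(2) pi_approx(2) by simp
  from power_mono[OF this, of 2] have \<alpha>_sq: "\<alpha>^2 \<le> 5/2"
    using assms(1) by (simp add: power_divide)
  have S_bounds: "0 \<le> S" "S \<le> Su"
    using sin_ge_zero[of \<alpha>] sin_le_Maclaurin5[of \<alpha>] assms \<alpha>_pi by (simp_all add: S_def Su_def)
  have C_bounds: "0 \<le> C" "Cl \<le> C"
    using cos_ge_zero[of \<alpha>] cos_ge_Maclaurin6[of \<alpha>] assms \<alpha>_pi by (simp_all add: C_def Cl_def)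
  have "Su \<le> \<alpha>"
  proof -
    have "\<alpha>^5 \<le> 5/2 * \<alpha>^3"
      using mult_right_mono[OF \<alpha>_sq, of "\<alpha>^3"] assms(1) by (simp add: power_add[symmetric])
    moreover have "0 \<le> \<alpha>^3"
      using assms(1) by simp
    ultimately show ?thesis unfolding Su_def by linarith
  qed
  then have "0 \<le> 120 * \<alpha> - 90 * Su"
    using assms(1) by simp
  txt \<open>The difference of the two sides is increasing in \<open>cos \<alpha>\<close> and decreasing in \<open>sin \<alpha>\<close>.\<close>
  have "90 * \<alpha> - 120 * Su - 16 * Su^3 + Cl * (120 * \<alpha> - 90 * Su)
     \<le> 90 * \<alpha> - 120 * Su - 16 * Su^3 + C * (120 * \<alpha> - 90 * Su)"
    using mult_right_mono[OF C_bounds(2) \<open>0 \<le> 120 * \<alpha> - 90 * Su\<close>] by simp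
  also have "\<dots> \<le> 90 * \<alpha> - 120 * S - 16 * S^3 + C * (120 * \<alpha> - 90 * S)"
    using power_mono[OF S_bounds(2,1), of 3] mult_left_mono[OF S_bounds(2) C_bounds(1)] S_bounds
    unfolding right_diff_distrib by linarith
  finally have "90 * \<alpha> - 120 * Su - 16 * Su^3 + Cl * (120 * \<alpha> - 90 * Su)
      \<le> (90 + 120 * C) * \<alpha> - ((120 + 90 * C) * S + 16 * S^3)"
    by (simp add: algebra_simps)
  moreover have "90 * \<alpha> - 120 * Su - 16 * Su^3 + Cl * (120 * \<alpha> - 90 * Su)
      = \<alpha>^3 * (4 - 31/40*(\<alpha>^2)^2 + 671/4320*(\<alpha>^2)^3 - 193/14400*(\<alpha>^2)^4
               + 1/1800*(\<alpha>^2)^5 - 1/108000*(\<alpha>^2)^6)"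
    by (simp add: Su_def Cl_def field_simps eval_nat_numeral)
  moreover have "0 < \<alpha>^3 * (4 - 31/40*(\<alpha>^2)^2 + 671/4320*(\<alpha>^2)^3 - 193/14400*(\<alpha>^2)^4
               + 1/1800*(\<alpha>^2)^5 - 1/108000*(\<alpha>^2)^6)"
    using sextic_pos[OF _ \<alpha>_sq] assms(1) by simp
  ultimately show ?thesis
    by (simp add: S_def C_def)
qed

definition lin_const :: "real \<Rightarrow> real" where
  "lin_const \<alpha> = 15 * (1 + \<alpha> * csc \<alpha>) * (sec (\<alpha>/2))^2 + 105 * (1 - \<alpha> * csc \<alpha>) * (csc (\<alpha>/2))^2"

definition lin_rhs :: "real \<Rightarrow> real \<Rightarrow> real" where
  "lin_rhs \<alpha> d = 4 * d^6 - 24 * d^4 + 48 * d^2 + lin_const \<alpha>"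

definition lin_coeff :: "real \<Rightarrow> real" where
  "lin_coeff d = 12 * d * (d^2 - 2)"

definition resultant :: "real \<Rightarrow> real \<Rightarrow> real" where
  "resultant \<alpha> d = 6 * (lin_rhs \<alpha> d)^2 + 8 * d * lin_rhs \<alpha> d * lin_coeff d
     + (6 * d^2 - 10 * (1 + \<alpha> * csc \<alpha>) * (sec (\<alpha>/2))^2) * (lin_coeff d)^2"

lemma half_angle_pos:
  fixes \<alpha> :: real
  assumes "0 < \<alpha>" "\<alpha> \<le> pi/2"
  shows "0 < sin (\<alpha>/2)" "0 < cos (\<alpha>/2)"
  using assms by (auto intro!: sin_gt_zero cos_gt_zero_pi)

lemma lin_const_less:
  fixes \<alpha> :: real
  assumes "0 < \<alpha>" "\<alpha> \<le> pi/2"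
  shows "lin_const \<alpha> < -32"
proof -
  define s c A where "s = sin (\<alpha>/2)" and "c = cos (\<alpha>/2)" and "A = \<alpha> * csc \<alpha>"
  have "0 < s" "0 < c"
    using half_angle_pos[OF assms] by (simp_all add: s_def c_def)
  have sin1: "sin \<alpha> = 2 * s * c"
    using sin_double[of "\<alpha>/2"] by (simp add: s_def c_def)
  have cos1: "cos \<alpha> = c^2 - s^2"
    using cos_double[of "\<alpha>/2"] by (simp add: s_def c_def)
  have "0 < sin \<alpha>"
    using \<open>0 < s\<close> \<open>0 < c\<close> sin1 by simp
  have \<alpha>_eq: "\<alpha> = A * (2 * s * c)"
    using \<open>0 < s\<close> \<open>0 < c\<close> by (simp add: A_def csc_def sin1)
  have "s^2 + c^2 = 1"
    by (simp add: s_def c_def)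
  define g where "g = (90 + 120 * cos \<alpha>) * \<alpha> - ((120 + 90 * cos \<alpha>) * sin \<alpha> + 16 * (sin \<alpha>)^3)"
  have "0 < g"
    using sin_cos_arc_inequality[OF assms] by (simp add: g_def)
  have "(15 * (1 + A) * s^2 + 105 * (1 - A) * c^2 + 32 * s^2 * c^2) * sin \<alpha> = - g / 2"
    (is "?X * _ = _")
    using \<open>s^2 + c^2 = 1\<close> \<alpha>_eq unfolding g_def cos1 sin1 by algebra
  then have "?X * sin \<alpha> < 0"
    using \<open>0 < g\<close> by linarith
  then have "?X < 0"
    using \<open>0 < sin \<alpha>\<close> by (simp add: mult_less_0_iff)
  moreover have "0 < s^2 * c^2"
    using \<open>0 < s\<close> \<open>0 < c\<close> by simp
  ultimately have "?X / (s^2 * c^2) < 0"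
    by (rule divide_neg_pos)
  moreover have "lin_const \<alpha> + 32 = ?X / (s^2 * c^2)"
    using \<open>0 < s\<close> \<open>0 < c\<close> unfolding lin_const_def A_def[symmetric]
    by (simp add: sec_def csc_def s_def[symmetric] c_def[symmetric] field_simps)
  ultimately show ?thesis
    by linarith
qed

lemma eq1_iff:
  "eq1 \<alpha> d u \<longleftrightarrow>
     6 * u^2 + 8 * cos (\<alpha>/2) * d * u + (6 * (cos (\<alpha>/2))^2 * d^2 - 10 * (1 + \<alpha> * csc \<alpha>)) = 0"
  using cos_double_cos[of "\<alpha>/2"] by (simp add: eq1_def algebra_simps)

lemma eq2_iff_linear:
  assumes "cos (\<alpha>/2) \<noteq> 0" "eq1 \<alpha> d u"
  shows "eq2 \<alpha> d u \<longleftrightarrow> sec (\<alpha>/2) * lin_coeff d * u = lin_rhs \<alpha> d"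
proof -
  define c where "c = cos (\<alpha>/2)"
  have "4 * d^6 - 24 * d^4 + 57 * d^2 - 12 * sec (\<alpha>/2) * d * (d^2 - 3) * u
       + 9 * (sec (\<alpha>/2))^2 * u^2 + 105 * (csc (\<alpha>/2))^2 * (1 - \<alpha> * csc \<alpha>)
     = 3/2 * (sec (\<alpha>/2))^2 * (6 * u^2 + 8 * c * d * u + (6 * c^2 * d^2 - 10 * (1 + \<alpha> * csc \<alpha>)))
       + lin_rhs \<alpha> d - sec (\<alpha>/2) * lin_coeff d * u"
    unfolding lin_rhs_def lin_const_def lin_coeff_def sec_def c_def[symmetric]
    using assms(1) by (simp add: c_def[symmetric] field_simps eval_nat_numeral)
  then show ?thesis
    using assms(2) unfolding eq2_def eq1_iff c_def[symmetric] by auto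
qed

lemma quadratic_linear_system_iff:
  fixes a b e l r u :: "'a::field"
  assumes "e \<noteq> 0" and "l = 0 \<Longrightarrow> r \<noteq> 0"
  shows "(e * u^2 + b * u + a = 0 \<and> l * u = r) \<longleftrightarrow> (e * r^2 + b * r * l + a * l^2 = 0 \<and> u = r / l)"
proof (cases "l = 0")
  case False
  have "l * u = r \<longleftrightarrow> u = r / l"
    using False by (auto simp: field_simps)
  moreover have "e * r^2 + b * r * l + a * l^2 = l^2 * (e * u^2 + b * u + a)" if "l * u = r"
    unfolding that[symmetric] by (simp add: algebra_simps power2_eq_square)
  ultimately show ?thesis
    using False by auto
qed (use assms in auto)

lemma p1_eq_resultant:
  assumes "sin (\<alpha>/2) \<noteq> 0" "cos (\<alpha>/2) \<noteq> 0"
  shows "p1 \<alpha> d = - ((sin \<alpha>)^6 / 3) * resultant \<alpha> d"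
proof -
  define s c where "s = sin (\<alpha>/2)" and "c = cos (\<alpha>/2)"
  have sin1: "sin \<alpha> = 2 * s * c"
    using sin_double[of "\<alpha>/2"] by (simp add: s_def c_def)
  have cos1: "cos \<alpha> = c^2 - s^2"
    using cos_double[of "\<alpha>/2"] by (simp add: s_def c_def)
  have sin2: "sin (2*\<alpha>) = 2 * sin \<alpha> * cos \<alpha>"
    by (rule sin_double)
  have "sin (3*\<alpha>) = sin (2*\<alpha> + \<alpha>)"
    by simp
  also have "\<dots> = sin \<alpha> * (3 * (cos \<alpha>)^2 - (sin \<alpha>)^2)"
    unfolding sin_add sin_double cos_double by (simp add: algebra_simps power2_eq_square)
  finally have sin3: "sin (3*\<alpha>) = sin \<alpha> * (3 * (cos \<alpha>)^2 - (sin \<alpha>)^2)" .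
  have "s^2 + c^2 = 1" "s \<noteq> 0" "c \<noteq> 0"
    using assms by (simp_all add: s_def c_def)
  then show ?thesis
    unfolding p1_def resultant_def lin_rhs_def lin_const_def lin_coeff_def csc_def sec_def
      sin3 sin2 cos1 sin1 s_def[symmetric] c_def[symmetric]
    by (simp add: field_simps eval_nat_numeral) algebra
qed

lemma eq1_eq2_iff:
  assumes "0 < \<alpha>" "\<alpha> \<le> pi/2" "0 < d"
  shows "eq1 \<alpha> d u \<and> eq2 \<alpha> d u \<longleftrightarrow> p1 \<alpha> d = 0 \<and> u = lin_rhs \<alpha> d / (sec (\<alpha>/2) * lin_coeff d)"
proof -
  define c where "c = cos (\<alpha>/2)"
  have "0 < sin (\<alpha>/2)" "0 < c"
    using half_angle_pos[OF assms(1,2)] by (simp_all add: c_def)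
  have sec_eq: "sec (\<alpha>/2) = 1 / c"
    by (simp add: sec_def c_def)
  have no_common_zero: "lin_rhs \<alpha> d \<noteq> 0" if "sec (\<alpha>/2) * lin_coeff d = 0"
  proof -
    have "d^2 = 2"
      using that sec_eq \<open>0 < c\<close> assms(3) by (auto simp: lin_coeff_def)
    moreover have "d^4 = (d^2)^2" "d^6 = (d^2)^3"
      by (simp_all flip: power_mult)
    ultimately have "lin_rhs \<alpha> d = 32 + lin_const \<alpha>"
      by (simp add: lin_rhs_def)
    then show ?thesis
      using lin_const_less[OF assms(1,2)] by simp
  qed
  have "eq1 \<alpha> d u \<and> eq2 \<alpha> d u \<longleftrightarrow> eq1 \<alpha> d u \<and> sec (\<alpha>/2) * lin_coeff d * u = lin_rhs \<alpha> d"
    using eq2_iff_linear[of \<alpha> d u] \<open>0 < c\<close> by (auto simp: c_def)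
  also have "\<dots> \<longleftrightarrow> 6 * (lin_rhs \<alpha> d)^2 + 8 * c * d * lin_rhs \<alpha> d * (sec (\<alpha>/2) * lin_coeff d)
        + (6 * c^2 * d^2 - 10 * (1 + \<alpha> * csc \<alpha>)) * (sec (\<alpha>/2) * lin_coeff d)^2 = 0
      \<and> u = lin_rhs \<alpha> d / (sec (\<alpha>/2) * lin_coeff d)"
    unfolding eq1_iff c_def[symmetric] by (rule quadratic_linear_system_iff) (use no_common_zero in auto)
  also have "6 * (lin_rhs \<alpha> d)^2 + 8 * c * d * lin_rhs \<alpha> d * (sec (\<alpha>/2) * lin_coeff d)
        + (6 * c^2 * d^2 - 10 * (1 + \<alpha> * csc \<alpha>)) * (sec (\<alpha>/2) * lin_coeff d)^2 = resultant \<alpha> d"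
    using \<open>0 < c\<close> unfolding resultant_def sec_eq by (simp add: field_simps power2_eq_square)
  also have "resultant \<alpha> d = 0 \<longleftrightarrow> p1 \<alpha> d = 0"
    using p1_eq_resultant[of \<alpha> d] \<open>0 < sin (\<alpha>/2)\<close> \<open>0 < c\<close> sin_gt_zero[of \<alpha>] assms
    by (auto simp: c_def)
  finally show ?thesis .
qed

lemma graph_eqpoll: "{(x, y). P x \<and> y = f x} \<approx> {x. P x}"
proof -
  have "bij_betw fst {(x, y). P x \<and> y = f x} {x. P x}"
    by (rule bij_betw_byWitness[where f' = "\<lambda>x. (x, f x)"]) auto
  then show ?thesis
    unfolding eqpoll_def by blast
qed

lemma pos_sqrt_eqpoll: "{d :: real. 0 < d \<and> P d} \<approx> {x. 0 < x \<and> P (sqrt x)}"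
proof -
  have "bij_betw (\<lambda>d. d^2) {d. 0 < d \<and> P d} {x. 0 < x \<and> P (sqrt x)}"
    by (rule bij_betw_byWitness[where f' = sqrt]) auto
  then show ?thesis
    unfolding eqpoll_def by blast
qed

theorem theorem1:
  fixes \<alpha> :: real
  assumes "0 < \<alpha>" and "\<alpha> \<le> pi / 2"
  shows "{(d::real, u1::real). d > 0 \<and> eq1 \<alpha> d u1 \<and> eq2 \<alpha> d u1}
           \<approx> {x :: real. x > 0 \<and> p \<alpha> x = 0}"
proof -
  have "{(d, u1). d > 0 \<and> eq1 \<alpha> d u1 \<and> eq2 \<alpha> d u1}
      = {(d, u1). (0 < d \<and> p1 \<alpha> d = 0) \<and> u1 = lin_rhs \<alpha> d / (sec (\<alpha>/2) * lin_coeff d)}"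
    using eq1_eq2_iff[OF assms] by auto
  also have "\<dots> \<approx> {d. 0 < d \<and> p1 \<alpha> d = 0}"
    by (rule graph_eqpoll)
  also have "\<dots> \<approx> {x. 0 < x \<and> p1 \<alpha> (sqrt x) = 0}"
    by (rule pos_sqrt_eqpoll)
  finally show ?thesis
    unfolding p_def .
qed

end
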